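(* Let $\mathcal N=(Q,\Sigma,\delta,I,F)$ be an NFA with $L=\mathcal L(\mathcal N)$. Then $\mathsf G^r(\mathcal N)$ (equivalently, the determinization $\mathcal N^D$) is the minimal DFA for $L$ (up to isomorphism) if and only if for every $q\in Q$, $P_{\sim^r_L}(W^{\mathcal N}_{I,q})=W^{\mathcal N}_{I,q}$.
   Context: NFA $\mathcal N=(Q,\Sigma,\delta,I,F)$ with $\delta:Q\times\Sigma\to\wp(Q)$ extended to words as $\hat\delta$; $W^{\mathcal N}_{S,T}=\{w\in\Sigma^*\mid\exists q\in S,q'\in T: q'\in\hat\delta(q,w)\}$ (singletons without braces); $\mathrm{post}^{\mathcal N}_w(S)=\{q\mid w\in W^{\mathcal N}_{S,q}\}$; $\mathcal L(\mathcal N)=W^{\mathcal N}_{I,F}$. $u\sim^r_L v\iff u^{-1}L=v^{-1}L$ where $u^{-1}L=\{x\mid ux\in L\}$; $u\sim^r_{\mathcal N}v\iff \mathrm{post}^{\mathcal N}_u(I)=\mathrm{post}^{\mathcal N}_v(I)$. For an equivalence $\sim$, $P_\sim(u)$ is the class of $u$ and $P_\sim(S)=\bigcup_{u\in S}P_\sim(u)$. $\mathsf G^r(\mathcal N)$ is the DFA with states $\{P_{\sim^r_{\mathcal N}}(u)\mid u\in\Sigma^*\}$, initial state $P_{\sim^r_{\mathcal N}}(\varepsilon)$, final states $\{P_{\sim^r_{\mathcal N}}(u)\mid u\in L\}$, and transition from $P_{\sim^r_{\mathcal N}}(u)$ on $a$ to $P_{\sim^r_{\mathcal N}}(ua)$;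 it is isomorphic to the reachable subset-construction DFA $\mathcal N^D$. The minimal DFA for $L$ is the unique (up to isomorphism) complete DFA for $L$ with fewest states. *)

theory Defs
  imports Main
begin

record ('q, 'b) nfa =
  nQ :: "'q set"
  nDelta :: "'q \<Rightarrow> 'b \<Rightarrow> 'q set"
  nI :: "'q set"
  nF :: "'q set"

definition is_NFA :: "('q, 'b::finite) nfa \<Rightarrow> bool" where
  "is_NFA N \<longleftrightarrow> finite (nQ N) \<and> nI N \<subseteq> nQ N \<and> nF N \<subseteq> nQ N
     \<and> (\<forall>q\<in>nQ N. \<forall>a. nDelta N q a \<subseteq> nQ N)"

fun delta_hat :: "('q, 'b) nfa \<Rightarrow> 'q \<Rightarrow> 'b list \<Rightarrow> 'q set" where
  "delta_hat N q [] = {q}"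
| "delta_hat N q (a # w) = (\<Union>p \<in> nDelta N q a. delta_hat N p w)"

definition W :: "('q, 'b) nfa \<Rightarrow> 'q set \<Rightarrow> 'q set \<Rightarrow> 'b list set" where
  "W N S T = {w. \<exists>q\<in>S. \<exists>q'\<in>T. q' \<in> delta_hat N q w}"

definition post :: "('q, 'b) nfa \<Rightarrow> 'b list \<Rightarrow> 'q set \<Rightarrow> 'q set" where
  "post N w S = {q. w \<in> W N S {q}}"

definition nfa_lang :: "('q, 'b) nfa \<Rightarrow> 'b list set" where
  "nfa_lang N = W N (nI N) (nF N)"

definition left_quot :: "'b list \<Rightarrow> 'b list set \<Rightarrow> 'b list set" where
  "left_quot u L = {x. u @ x \<in> L}"

definition right_equiv_lang :: "'b list set \<Rightarrow> 'b list \<Rightarrow> 'b list \<Rightarrow> bool" where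
  "right_equiv_lang L u v \<longleftrightarrow> left_quot u L = left_quot v L"

definition right_equiv_nfa :: "('q, 'b) nfa \<Rightarrow> 'b list \<Rightarrow> 'b list \<Rightarrow> bool" where
  "right_equiv_nfa N u v \<longleftrightarrow> post N u (nI N) = post N v (nI N)"

definition cls :: "('w \<Rightarrow> 'w \<Rightarrow> bool) \<Rightarrow> 'w \<Rightarrow> 'w set" where
  "cls R u = {v. R u v}"

definition cls_set :: "('w \<Rightarrow> 'w \<Rightarrow> bool) \<Rightarrow> 'w set \<Rightarrow> 'w set" where
  "cls_set R S = (\<Union>u\<in>S. cls R u)"

record ('s, 'b) dfa =
  dStates :: "'s set"
  dInit :: 's
  dFinal :: "'s set"
  dTrans :: "'s \<Rightarrow> 'b \<Rightarrow> 's"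

definition is_DFA :: "('s, 'b) dfa \<Rightarrow> bool" where
  "is_DFA D \<longleftrightarrow> dInit D \<in> dStates D \<and> dFinal D \<subseteq> dStates D
     \<and> (\<forall>s\<in>dStates D. \<forall>a. dTrans D s a \<in> dStates D)"

definition dfa_lang :: "('s, 'b) dfa \<Rightarrow> 'b list set" where
  "dfa_lang D = {w. foldl (dTrans D) (dInit D) w \<in> dFinal D}"

definition dfa_iso :: "('s, 'b) dfa \<Rightarrow> ('t, 'b) dfa \<Rightarrow> bool" where
  "dfa_iso D E \<longleftrightarrow> (\<exists>f. bij_betw f (dStates D) (dStates E) \<and> f (dInit D) = dInit E
     \<and> (\<forall>s\<in>dStates D. f s \<in> dFinal E \<longleftrightarrow> s \<in> dFinal D)
     \<and> (\<forall>s\<in>dStates D. \<forall>a. f (dTrans D s a) = dTrans E (f s) a))"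

text \<open>Competitors are
  taken with states in nat; every DFA with finitely many states can be relabelled into
  nat, and a DFA with infinitely many states never has fewer states than a finite one.\<close>
definition is_minimal_DFA :: "('s, 'b) dfa \<Rightarrow> 'b list set \<Rightarrow> bool" where
  "is_minimal_DFA D L \<longleftrightarrow> is_DFA D \<and> dfa_lang D = L \<and> finite (dStates D)
     \<and> (\<forall>D' :: (nat, 'b) dfa. is_DFA D' \<and> finite (dStates D') \<and> dfa_lang D' = L
          \<longrightarrow> card (dStates D) \<le> card (dStates D'))"

definition Gr :: "('q, 'b) nfa \<Rightarrow> ('b list set, 'b) dfa" where
  "Gr N = \<lparr> dStates = {cls (right_equiv_nfa N) u | u. True},
           dInit = cls (right_equiv_nfa N) [],
           dFinal = {cls (right_equiv_nfa N) u | u. u \<in> nfa_lang N},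
           dTrans = (\<lambda>S a. cls (right_equiv_nfa N)
                       ((SOME u. S = cls (right_equiv_nfa N) u) @ [a])) \<rparr>"

end

theory Submission
  imports Defs
begin

text \<open>
  The right equivalence of \<open>N\<close> always refines the Nerode equivalence of \<open>L\<close>, and
  \<open>G\<^sup>r(N)\<close> is the quotient automaton of the former, whereas the minimal DFA is the
  quotient of the latter. So \<open>G\<^sup>r(N)\<close> is minimal iff it has no more states than there
  are Nerode classes, iff (by finiteness) the two equivalences coincide. Since
  \<open>u \<sim>\<^sup>r\<^sub>N v\<close> means that \<open>u\<close> and \<open>v\<close> lie in exactly the same sets \<open>W\<^sub>I\<^sub>,\<^sub>q\<close>, this happens
  iff every \<open>W\<^sub>I\<^sub>,\<^sub>q\<close> is a union of Nerode classes.
\<close>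

lemma cls_eq_iff: "equivp R \<Longrightarrow> cls R u = cls R v \<longleftrightarrow> R u v"
  unfolding cls_def by (metis equivp_def mem_Collect_eq)

lemma cls_set_cls_of_refines:
  assumes "equivp S" "reflp R" "\<And>u v. R u v \<Longrightarrow> S u v"
  shows "cls_set S (cls R u) = cls S u"
  using assms unfolding cls_set_def cls_def reflp_def
  by (auto intro: equivp_transp[OF assms(1)] equivp_symp[OF assms(1)])

text \<open>The surjection \<open>cls_set S\<close> from \<open>R\<close>-classes onto \<open>S\<close>-classes is injective
  as soon as there are at most as many \<open>R\<close>-classes.\<close>
lemma card_classes_le_iff_refines:
  assumes R: "equivp R" and S: "equivp S" and RS: "\<And>u v. R u v \<Longrightarrow> S u v"
    and fin: "finite (range (cls R))"
  shows "card (range (cls R)) \<le> card (range (cls S)) \<longleftrightarrow> (\<forall>u v. S u v \<longrightarrow> R u v)"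
proof
  have phi: "cls_set S (cls R u) = cls S u" for u
    using cls_set_cls_of_refines[OF S equivp_reflp2[OF R] RS] .
  then have onto: "cls_set S ` range (cls R) = range (cls S)"
    by (auto simp: image_image)
  assume "card (range (cls R)) \<le> card (range (cls S))"
  with onto have "card (cls_set S ` range (cls R)) = card (range (cls R))"
    using card_image_le[OF fin, of "cls_set S"] by simp
  then have inj: "inj_on (cls_set S) (range (cls R))"
    using fin eq_card_imp_inj_on by blast
  show "\<forall>u v. S u v \<longrightarrow> R u v"
  proof (intro allI impI)
    fix u v assume "S u v"
    then have "cls_set S (cls R u) = cls_set S (cls R v)"
      using phi cls_eq_iff[OF S] by simp
    then have "cls R u = cls R v"
      using inj by (simp add: inj_on_def)
    then show "R u v" using cls_eq_iff[OF R] by simp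
  qed
next
  assume "\<forall>u v. S u v \<longrightarrow> R u v"
  then have "R = S" using RS by blast
  then show "card (range (cls R)) \<le> card (range (cls S))" by simp
qed

definition quotient_dfa :: "('b list \<Rightarrow> 'b list \<Rightarrow> bool) \<Rightarrow> 'b list set \<Rightarrow> ('b list set, 'b) dfa" where
  "quotient_dfa R L = \<lparr> dStates = {cls R u | u. True},
     dInit = cls R [],
     dFinal = {cls R u | u. u \<in> L},
     dTrans = (\<lambda>S a. cls R ((SOME u. S = cls R u) @ [a])) \<rparr>"

lemma Gr_eq_quotient_dfa: "Gr N = quotient_dfa (right_equiv_nfa N) (nfa_lang N)"
  by (simp add: Gr_def quotient_dfa_def)

locale right_congruence =
  fixes R :: "'b list \<Rightarrow> 'b list \<Rightarrow> bool" and L :: "'b list set"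
  assumes equiv: "equivp R"
    and append_cong: "\<And>u v a. R u v \<Longrightarrow> R (u @ [a]) (v @ [a])"
    and saturates: "\<And>u v. R u v \<Longrightarrow> u \<in> L \<longleftrightarrow> v \<in> L"
begin

lemma is_DFA_quotient_dfa: "is_DFA (quotient_dfa R L)"
  unfolding is_DFA_def quotient_dfa_def by auto

lemma dTrans_quotient_dfa: "dTrans (quotient_dfa R L) (cls R u) a = cls R (u @ [a])"
proof -
  have "cls R u = cls R (SOME v. cls R u = cls R v)"
    by (rule someI_ex) blast
  then have "R u (SOME v. cls R u = cls R v)"
    using cls_eq_iff[OF equiv] by blast
  then have "R (u @ [a]) ((SOME v. cls R u = cls R v) @ [a])"
    by (rule append_cong)
  then have "cls R (u @ [a]) = cls R ((SOME v. cls R u = cls R v) @ [a])"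
    using cls_eq_iff[OF equiv] by blast
  then show ?thesis
    by (simp add: quotient_dfa_def)
qed

lemma foldl_quotient_dfa: "foldl (dTrans (quotient_dfa R L)) (cls R u) w = cls R (u @ w)"
  by (induction w arbitrary: u) (simp_all add: dTrans_quotient_dfa)

lemma dfa_lang_quotient_dfa: "dfa_lang (quotient_dfa R L) = L"
proof -
  have "foldl (dTrans (quotient_dfa R L)) (dInit (quotient_dfa R L)) w = cls R w" for w
    using foldl_quotient_dfa[of "[]" w] by (simp add: quotient_dfa_def)
  moreover have "cls R w \<in> dFinal (quotient_dfa R L) \<longleftrightarrow> w \<in> L" for w
    using saturates equivp_reflp[OF equiv] by (auto simp: quotient_dfa_def cls_eq_iff[OF equiv])
  ultimately show ?thesis unfolding dfa_lang_def by auto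
qed

end

lemma right_congruence_Nerode: "right_congruence (right_equiv_lang L) L"
proof
  show "equivp (right_equiv_lang L)"
    by (auto simp: equivp_def right_equiv_lang_def fun_eq_iff)
next
  fix u v a assume "right_equiv_lang L u v"
  then show "right_equiv_lang L (u @ [a]) (v @ [a])"
    by (simp add: right_equiv_lang_def left_quot_def set_eq_iff)
next
  fix u v assume "right_equiv_lang L u v"
  then show "u \<in> L \<longleftrightarrow> v \<in> L"
    by (simp add: right_equiv_lang_def left_quot_def set_eq_iff) (metis append_Nil2)
qed

lemma foldl_dTrans_in_dStates:
  "is_DFA D \<Longrightarrow> s \<in> dStates D \<Longrightarrow> foldl (dTrans D) s w \<in> dStates D"
  by (induction w arbitrary: s) (auto simp: is_DFA_def)

lemma dfa_iso_card_eq: "dfa_iso D E \<Longrightarrow> card (dStates E) = card (dStates D)"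
  unfolding dfa_iso_def by (metis bij_betw_same_card)

lemma dfa_iso_finite: "dfa_iso D E \<Longrightarrow> finite (dStates D) \<Longrightarrow> finite (dStates E)"
  unfolding dfa_iso_def by (metis bij_betw_finite)

lemma dfa_iso_lang_eq:
  assumes D: "is_DFA D" and iso: "dfa_iso D E"
  shows "dfa_lang E = dfa_lang D"
proof -
  obtain f where f: "bij_betw f (dStates D) (dStates E)" "f (dInit D) = dInit E"
    "\<forall>s\<in>dStates D. f s \<in> dFinal E \<longleftrightarrow> s \<in> dFinal D"
    "\<forall>s\<in>dStates D. \<forall>a. f (dTrans D s a) = dTrans E (f s) a"
    using iso unfolding dfa_iso_def by blast
  have "s \<in> dStates D \<Longrightarrow> f (foldl (dTrans D) s w) = foldl (dTrans E) (f s) w" for s w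
  proof (induction w arbitrary: s)
    case (Cons a w)
    then show ?case using D f(4) by (simp add: is_DFA_def)
  qed simp
  with f(2,3) foldl_dTrans_in_dStates[OF D] D show ?thesis
    unfolding dfa_lang_def is_DFA_def by (metis (lifting))
qed

lemma ex_dfa_iso_nat:
  fixes D :: "('s, 'b) dfa"
  assumes D: "is_DFA D" and fin: "finite (dStates D)"
  shows "\<exists>E :: (nat, 'b) dfa. is_DFA E \<and> dfa_iso D E"
proof -
  let ?S = "dStates D"
  obtain h where "bij_betw h ?S {0..<card ?S}"
    using ex_bij_betw_finite_nat[OF fin] by blast
  then have inj: "inj_on h ?S" by (simp add: bij_betw_def)
  define E :: "(nat, 'b) dfa" where "E = \<lparr> dStates = h ` ?S, dInit = h (dInit D),
    dFinal = h ` dFinal D, dTrans = (\<lambda>n a. h (dTrans D (inv_into ?S h n) a)) \<rparr>"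
  have "is_DFA E" using D inj by (auto simp: E_def is_DFA_def)
  moreover have "dfa_iso D E"
    unfolding dfa_iso_def
    by (rule exI[of _ h]) (use D inj in \<open>auto simp: E_def is_DFA_def inj_on_def bij_betw_def\<close>)
  ultimately show ?thesis by blast
qed

text \<open>The Nerode class of \<open>u\<close> depends only on the state reached on \<open>u\<close>.\<close>
lemma Nerode_classes_subset:
  assumes "is_DFA D"
  shows "range (cls (right_equiv_lang (dfa_lang D)))
    \<subseteq> (\<lambda>s. {v. left_quot v (dfa_lang D) = {x. foldl (dTrans D) s x \<in> dFinal D}}) ` dStates D"
proof
  fix X assume "X \<in> range (cls (right_equiv_lang (dfa_lang D)))"
  then obtain u where u: "X = cls (right_equiv_lang (dfa_lang D)) u" by blast
  let ?s = "foldl (dTrans D) (dInit D) u"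
  have "left_quot u (dfa_lang D) = {x. foldl (dTrans D) ?s x \<in> dFinal D}"
    by (simp add: left_quot_def dfa_lang_def)
  then have "X = {v. left_quot v (dfa_lang D) = {x. foldl (dTrans D) ?s x \<in> dFinal D}}"
    unfolding u cls_def right_equiv_lang_def by metis
  moreover have "?s \<in> dStates D"
    using foldl_dTrans_in_dStates[OF assms] assms by (simp add: is_DFA_def)
  ultimately show "X \<in> (\<lambda>s. {v. left_quot v (dfa_lang D) = {x. foldl (dTrans D) s x \<in> dFinal D}}) ` dStates D"
    by blast
qed

lemma finite_Nerode_classes:
  "is_DFA D \<Longrightarrow> finite (dStates D) \<Longrightarrow> finite (range (cls (right_equiv_lang (dfa_lang D))))"
  by (rule finite_subset[OF Nerode_classes_subset finite_imageI])

lemma card_Nerode_classes_le: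
  assumes "is_DFA D" "finite (dStates D)"
  shows "card (range (cls (right_equiv_lang (dfa_lang D)))) \<le> card (dStates D)"
  by (rule order_trans[OF card_mono[OF finite_imageI[OF assms(2)] Nerode_classes_subset[OF assms(1)]]
        card_image_le[OF assms(2)]])

lemma ex_minimal_dfa_iso_iff:
  fixes D :: "('s, 'b) dfa"
  assumes D: "is_DFA D" and fin: "finite (dStates D)"
  defines "L \<equiv> dfa_lang D"
  shows "(\<exists>M :: (nat, 'b) dfa. is_minimal_DFA M L \<and> dfa_iso D M)
    \<longleftrightarrow> card (dStates D) \<le> card (range (cls (right_equiv_lang L)))"
proof
  assume "\<exists>M :: (nat, 'b) dfa. is_minimal_DFA M L \<and> dfa_iso D M"
  then obtain M :: "(nat, 'b) dfa" where M: "is_minimal_DFA M L" "dfa_iso D M" by blast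
  let ?Q = "quotient_dfa (right_equiv_lang L) L"
  interpret right_congruence "right_equiv_lang L" L by (rule right_congruence_Nerode)
  have Q: "dStates ?Q = range (cls (right_equiv_lang L))"
    by (auto simp: quotient_dfa_def)
  then have "finite (dStates ?Q)"
    using finite_Nerode_classes[OF D fin] by (simp add: L_def)
  then obtain E :: "(nat, 'b) dfa" where E: "is_DFA E" "dfa_iso ?Q E"
    using ex_dfa_iso_nat[OF is_DFA_quotient_dfa] by blast
  have "finite (dStates E)"
    using dfa_iso_finite[OF E(2)] \<open>finite (dStates ?Q)\<close> .
  moreover have "dfa_lang E = L"
    using dfa_iso_lang_eq[OF is_DFA_quotient_dfa E(2)] dfa_lang_quotient_dfa by simp
  ultimately have "card (dStates M) \<le> card (dStates E)"
    using M(1) E(1) unfolding is_minimal_DFA_def by blast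
  then show "card (dStates D) \<le> card (range (cls (right_equiv_lang L)))"
    using dfa_iso_card_eq[OF M(2)] dfa_iso_card_eq[OF E(2)] Q by simp
next
  assume le: "card (dStates D) \<le> card (range (cls (right_equiv_lang L)))"
  obtain M :: "(nat, 'b) dfa" where M: "is_DFA M" "dfa_iso D M"
    using ex_dfa_iso_nat[OF D fin] by blast
  have "finite (dStates M)"
    using dfa_iso_finite[OF M(2) fin] .
  moreover have "card (dStates M) \<le> card (dStates D')"
    if "is_DFA D'" "finite (dStates D')" "dfa_lang D' = L" for D' :: "(nat, 'b) dfa"
    using card_Nerode_classes_le[OF that(1,2)] that(3) le dfa_iso_card_eq[OF M(2)] by simp
  ultimately have "is_minimal_DFA M L"
    using M dfa_iso_lang_eq[OF D M(2)] by (simp add: is_minimal_DFA_def L_def)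
  with M(2) show "\<exists>M :: (nat, 'b) dfa. is_minimal_DFA M L \<and> dfa_iso D M" by blast
qed

lemma delta_hat_append: "delta_hat N q (u @ v) = (\<Union>p\<in>delta_hat N q u. delta_hat N p v)"
  by (induction u arbitrary: q) auto

lemma post_append: "post N (u @ v) S = post N v (post N u S)"
  unfolding post_def W_def by (auto simp: delta_hat_append)

lemma delta_hat_subset_nQ: "is_NFA N \<Longrightarrow> q \<in> nQ N \<Longrightarrow> delta_hat N q w \<subseteq> nQ N"
proof (induction w arbitrary: q)
  case (Cons a w)
  then have "nDelta N q a \<subseteq> nQ N" by (simp add: is_NFA_def)
  with Cons show ?case by auto
qed simp

lemma post_subset_nQ: "is_NFA N \<Longrightarrow> S \<subseteq> nQ N \<Longrightarrow> post N w S \<subseteq> nQ N"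
  unfolding post_def W_def using delta_hat_subset_nQ by fastforce

lemma mem_nfa_lang_iff_post: "w \<in> nfa_lang N \<longleftrightarrow> post N w (nI N) \<inter> nF N \<noteq> {}"
  unfolding nfa_lang_def post_def W_def by auto

lemma W_initial_eq: "W N (nI N) {q} = {u. q \<in> post N u (nI N)}"
  unfolding post_def by simp

lemma right_equiv_nfa_imp_lang:
  "right_equiv_nfa N u v \<Longrightarrow> right_equiv_lang (nfa_lang N) u v"
  by (simp add: right_equiv_nfa_def right_equiv_lang_def left_quot_def
      mem_nfa_lang_iff_post post_append)

lemma right_congruence_nfa: "right_congruence (right_equiv_nfa N) (nfa_lang N)"
proof
  show "equivp (right_equiv_nfa N)"
    by (rule equivpI) (simp_all add: reflp_def symp_def transp_def right_equiv_nfa_def)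
qed (simp_all add: right_equiv_nfa_def post_append mem_nfa_lang_iff_post)

lemma finite_right_equiv_nfa_classes:
  assumes "is_NFA N"
  shows "finite (range (cls (right_equiv_nfa N)))"
proof -
  have "range (cls (right_equiv_nfa N)) \<subseteq> (\<lambda>S. {v. post N v (nI N) = S}) ` Pow (nQ N)"
    using post_subset_nQ[OF assms] assms
    by (auto simp: cls_def right_equiv_nfa_def is_NFA_def)
  moreover have "finite (nQ N)" using assms by (simp add: is_NFA_def)
  ultimately show ?thesis by (meson finite_Pow_iff finite_imageI finite_subset)
qed

lemma W_saturated_iff_Nerode_refines:
  assumes "is_NFA N"
  shows "(\<forall>q\<in>nQ N. cls_set (right_equiv_lang (nfa_lang N)) (W N (nI N) {q}) = W N (nI N) {q})
    \<longleftrightarrow> (\<forall>u v. right_equiv_lang (nfa_lang N) u v \<longrightarrow> right_equiv_nfa N u v)"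
    (is "(\<forall>q\<in>nQ N. cls_set ?RL (?W q) = ?W q) \<longleftrightarrow> _")
proof
  assume sat: "\<forall>q\<in>nQ N. cls_set ?RL (?W q) = ?W q"
  have post_mono: "post N u (nI N) \<subseteq> post N v (nI N)" if "?RL u v" for u v
  proof
    fix q assume q: "q \<in> post N u (nI N)"
    have "nI N \<subseteq> nQ N" using assms by (simp add: is_NFA_def)
    then have "q \<in> nQ N" using q post_subset_nQ[OF assms] by blast
    moreover have "v \<in> cls_set ?RL (?W q)"
      using q that unfolding cls_set_def cls_def W_initial_eq by blast
    ultimately show "q \<in> post N v (nI N)"
      using sat unfolding W_initial_eq by blast
  qed
  show "\<forall>u v. ?RL u v \<longrightarrow> right_equiv_nfa N u v"
  proof (intro allI impI)
    fix u v assume "?RL u v"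
    moreover from this have "?RL v u" by (simp add: right_equiv_lang_def)
    ultimately show "right_equiv_nfa N u v"
      unfolding right_equiv_nfa_def using post_mono by (simp add: subset_antisym)
  qed
next
  assume refines: "\<forall>u v. ?RL u v \<longrightarrow> right_equiv_nfa N u v"
  have "cls_set ?RL (?W q) \<subseteq> ?W q" for q
    using refines unfolding cls_set_def cls_def W_initial_eq right_equiv_nfa_def by blast
  moreover have "?W q \<subseteq> cls_set ?RL (?W q)" for q
    unfolding cls_set_def cls_def right_equiv_lang_def by blast
  ultimately show "\<forall>q\<in>nQ N. cls_set ?RL (?W q) = ?W q" by blast
qed

theorem theorem2:
  fixes N :: "('q, 'b::finite) nfa"
  assumes "is_NFA N"
  shows "(\<exists>M :: (nat, 'b) dfa. is_minimal_DFA M (nfa_lang N) \<and> dfa_iso (Gr N) M)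
     \<longleftrightarrow> (\<forall>q\<in>nQ N. cls_set (right_equiv_lang (nfa_lang N)) (W N (nI N) {q}) = W N (nI N) {q})"
proof -
  let ?RN = "right_equiv_nfa N" and ?RL = "right_equiv_lang (nfa_lang N)"
  interpret right_congruence ?RN "nfa_lang N" by (rule right_congruence_nfa)
  have states: "dStates (Gr N) = range (cls ?RN)"
    by (auto simp: Gr_def)
  have "is_DFA (Gr N)" and lang: "dfa_lang (Gr N) = nfa_lang N"
    by (simp_all add: Gr_eq_quotient_dfa is_DFA_quotient_dfa dfa_lang_quotient_dfa)
  then have "(\<exists>M :: (nat, 'b) dfa. is_minimal_DFA M (nfa_lang N) \<and> dfa_iso (Gr N) M)
      \<longleftrightarrow> card (range (cls ?RN)) \<le> card (range (cls ?RL))"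
    using ex_minimal_dfa_iso_iff[of "Gr N"] finite_right_equiv_nfa_classes[OF assms]
    by (simp add: states lang)
  also have "\<dots> \<longleftrightarrow> (\<forall>u v. ?RL u v \<longrightarrow> ?RN u v)"
    by (rule card_classes_le_iff_refines[OF equiv right_congruence.equiv[OF right_congruence_Nerode]
          right_equiv_nfa_imp_lang finite_right_equiv_nfa_classes[OF assms]])
  also have "\<dots> \<longleftrightarrow> (\<forall>q\<in>nQ N. cls_set ?RL (W N (nI N) {q}) = W N (nI N) {q})"
    by (rule W_saturated_iff_Nerode_refines[OF assms, symmetric])
  finally show ?thesis .
qed

end
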